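(* Let $D$ be an $n\times n$ distance matrix and let $q_0$ be the smallest $q\in\mathbb N$ such that $D^{(q)}=D$. Then every graph realisation $(G=(V,E),\Phi)$ of $D$ satisfies $|V|\ge n+(q_0-1)$.
   Context: $[n]=\{1,\dots,n\}$. An $n\times n$ matrix $D$ with non-negative integer entries is a distance matrix if (i) $D_{ii}=0$ for all $i$ and $D_{ij}>0$ for all $i\ne j$; (ii) $D$ is symmetric; (iii) $D_{iw}+D_{wj}\ge D_{ij}$ for all $i,j,w\in[n]$. For $q\in\mathbb N$, the $q$-skeleton $G^q$ of $D$ is the edge-weighted graph with vertex set $[n]$ having an edge $\{i,j\}$ ($i<j$) if and only if $D_{ij}\le q$, this edge having weight (length) $D_{ij}$. $D^{(q)}$ denotes the $n\times n$ matrix whose $(i,j)$ entry is the weighted shortest-path distance between $i$ and $j$ in $G^q$ (equal to $\infty$ if no path exists). A graph realisation of $D$ is a pair $(G,\Phi)$, where $G=(V,E)$ is a finite simple undirected unweighted graph and $\Phi:[n]\to V$ is an injective map such that $d_G(\Phi(i),\Phi(j))=D_{ij}$ for all $i,j\in[n]$; here $d_G$ denotes the shortest-path distance in $G$ (equal to $\infty$ if no path exists). *)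

theory Defs
  imports Main "HOL-Library.Extended_Nat"
begin

text \<open>Matrices are functions nat \<Rightarrow> nat \<Rightarrow> nat, indexed by [n] = {1..n}.\<close>

definition distance_matrix :: "nat \<Rightarrow> (nat \<Rightarrow> nat \<Rightarrow> nat) \<Rightarrow> bool" where
  "distance_matrix n D \<longleftrightarrow>
     (\<forall>i\<in>{1..n}. D i i = 0) \<and>
     (\<forall>i\<in>{1..n}. \<forall>j\<in>{1..n}. i \<noteq> j \<longrightarrow> D i j > 0) \<and>
     (\<forall>i\<in>{1..n}. \<forall>j\<in>{1..n}. D i j = D j i) \<and>
     (\<forall>i\<in>{1..n}. \<forall>j\<in>{1..n}. \<forall>w\<in>{1..n}. D i w + D w j \<ge> D i j)"

text \<open>Weighted shortest-path distance in the q-skeleton G^q (infinity if no path).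
  Walks are lists of vertices of [n]; consecutive vertices must be distinct and
  joined by an edge of G^q, i.e. have D-value at most q.\<close>
definition skel_dist :: "nat \<Rightarrow> (nat \<Rightarrow> nat \<Rightarrow> nat) \<Rightarrow> nat \<Rightarrow> nat \<Rightarrow> nat \<Rightarrow> enat" where
  "skel_dist n D q i j = Inf {enat (\<Sum>k<length xs - 1. D (xs!k) (xs!(k+1))) | xs.
      xs \<noteq> [] \<and> hd xs = i \<and> last xs = j \<and> set xs \<subseteq> {1..n} \<and>
      (\<forall>k<length xs - 1. xs!k \<noteq> xs!(k+1) \<and> D (xs!k) (xs!(k+1)) \<le> q)}"

definition skel_eq :: "nat \<Rightarrow> (nat \<Rightarrow> nat \<Rightarrow> nat) \<Rightarrow> nat \<Rightarrow> bool" where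
  "skel_eq n D q \<longleftrightarrow> (\<forall>i\<in>{1..n}. \<forall>j\<in>{1..n}. skel_dist n D q i j = enat (D i j))"

definition simple_graph :: "'v set \<Rightarrow> 'v set set \<Rightarrow> bool" where
  "simple_graph V E \<longleftrightarrow> finite V \<and>
     (\<forall>e\<in>E. \<exists>a b. a \<noteq> b \<and> a \<in> V \<and> b \<in> V \<and> e = {a, b})"

definition graph_dist :: "'v set \<Rightarrow> 'v set set \<Rightarrow> 'v \<Rightarrow> 'v \<Rightarrow> enat" where
  "graph_dist V E u v = Inf {enat (length xs - 1) | xs.
      xs \<noteq> [] \<and> hd xs = u \<and> last xs = v \<and> set xs \<subseteq> V \<and>
      (\<forall>k<length xs - 1. {xs!k, xs!(k+1)} \<in> E)}"

definition graph_realisation ::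
  "nat \<Rightarrow> (nat \<Rightarrow> nat \<Rightarrow> nat) \<Rightarrow> 'v set \<Rightarrow> 'v set set \<Rightarrow> (nat \<Rightarrow> 'v) \<Rightarrow> bool" where
  "graph_realisation n D V E \<Phi> \<longleftrightarrow> simple_graph V E \<and>
     \<Phi> ` {1..n} \<subseteq> V \<and> inj_on \<Phi> {1..n} \<and>
     (\<forall>i\<in>{1..n}. \<forall>j\<in>{1..n}. graph_dist V E (\<Phi> i) (\<Phi> j) = enat (D i j))"

end

theory Submission
  imports Defs
begin

(*
  Let q = q0 - 1, so that D^(q) differs from D. Among the pairs a, b with D^(q)(a,b) \<noteq> D(a,b)
  choose one with d = D(a,b) minimal. Then d > q, as otherwise a, b are adjacent in G^q; and no
  point w lies strictly between a and b, as otherwise the shorter pairs (a,w) and (w,b) would be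
  realised exactly in G^q. In a graph realisation, the d - 1 interior vertices of a shortest path
  from \<Phi> a to \<Phi> b are distinct, and none of them is an image \<Phi> w, since such a w would lie
  strictly between a and b. Hence |V| \<ge> n + d - 1 \<ge> n + q0 - 1.
*)

lemma successively_iff_nth_less:
  "successively P xs \<longleftrightarrow> (\<forall>k<length xs - 1. P (xs!k) (xs!(k+1)))"
  unfolding successively_conv_nth by (metis Suc_eq_plus1 less_diff_conv)

fun walk_weight :: "('a \<Rightarrow> 'a \<Rightarrow> nat) \<Rightarrow> 'a list \<Rightarrow> nat" where
  "walk_weight w (x # y # zs) = w x y + walk_weight w (y # zs)"
| "walk_weight w _ = 0"

definition is_walk :: "'a set \<Rightarrow> ('a \<Rightarrow> 'a \<Rightarrow> bool) \<Rightarrow> 'a list \<Rightarrow> bool" where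
  "is_walk S R xs \<longleftrightarrow> xs \<noteq> [] \<and> set xs \<subseteq> S \<and> successively R xs"

definition walk_dist ::
  "'a set \<Rightarrow> ('a \<Rightarrow> 'a \<Rightarrow> bool) \<Rightarrow> ('a \<Rightarrow> 'a \<Rightarrow> nat) \<Rightarrow> 'a \<Rightarrow> 'a \<Rightarrow> enat" where
  "walk_dist S R w u v =
     (INF xs \<in> {xs. is_walk S R xs \<and> hd xs = u \<and> last xs = v}. enat (walk_weight w xs))"

lemma walk_weight_conv_sum:
  "walk_weight w xs = (\<Sum>k<length xs - 1. w (xs!k) (xs!(k+1)))"
proof (induction w xs rule: walk_weight.induct)
  case (1 w x y zs)
  then show ?case by (simp add: sum.lessThan_Suc_shift del: sum.lessThan_Suc)
qed auto

lemma walk_weight_1: "walk_weight (\<lambda>_ _. 1) xs = length xs - 1"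
  by (induction xs rule: induct_list012) auto

lemma skel_dist_eq_walk_dist:
  "skel_dist n D q = walk_dist {1..n} (\<lambda>a b. a \<noteq> b \<and> D a b \<le> q) D"
  unfolding skel_dist_def walk_dist_def is_walk_def walk_weight_conv_sum successively_iff_nth_less
  by (intro ext arg_cong[where f = Inf]) blast

lemma graph_dist_eq_walk_dist:
  "graph_dist V E = walk_dist V (\<lambda>a b. {a, b} \<in> E) (\<lambda>_ _. 1)"
  unfolding graph_dist_def walk_dist_def is_walk_def walk_weight_1 successively_iff_nth_less
  by (intro ext arg_cong[where f = Inf]) blast

lemma is_walk_join:
  assumes "is_walk S R xs" "is_walk S R ys" "last xs = hd ys"
  shows "is_walk S R (butlast xs @ ys)"
proof -
  have ne: "xs \<noteq> []" "ys \<noteq> []" using assms unfolding is_walk_def by auto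
  then have "successively R (butlast xs @ [hd ys])"
    using assms(1,3) unfolding is_walk_def by (metis append_butlast_last_id)
  then have "successively R (butlast xs @ ys)"
    using assms(2) ne(2) unfolding is_walk_def by (auto simp: successively_append_iff)
  moreover have "set (butlast xs) \<subseteq> S"
    using assms(1) unfolding is_walk_def by (meson in_set_butlastD subset_iff)
  ultimately show ?thesis using assms(2) unfolding is_walk_def by simp
qed

lemma walk_weight_join:
  assumes "xs \<noteq> []" "ys \<noteq> []" "last xs = hd ys"
  shows "walk_weight w (butlast xs @ ys) = walk_weight w xs + walk_weight w ys"
  using assms
proof (induction xs rule: induct_list012)
  case (3 x y zs)
  then show ?case by (cases zs) (auto simp: neq_Nil_conv)
qed (auto simp: neq_Nil_conv)

lemma is_walk_take: "is_walk S R xs \<Longrightarrow> is_walk S R (take (Suc k) xs)"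
  unfolding is_walk_def
  by (metis append_take_drop_id nat.discI set_take_subset subset_trans
      successively_append_iff take_eq_Nil2)

lemma is_walk_drop: "is_walk S R xs \<Longrightarrow> k < length xs \<Longrightarrow> is_walk S R (drop k xs)"
  unfolding is_walk_def
  by (metis append_take_drop_id drop_eq_Nil not_le set_drop_subset subset_trans
      successively_append_iff)

lemma walk_dist_le: "is_walk S R xs \<Longrightarrow> walk_dist S R w (hd xs) (last xs) \<le> walk_weight w xs"
  unfolding walk_dist_def by (rule INF_lower) simp

lemma walk_dist_attained:
  assumes "walk_dist S R w u v \<noteq> \<infinity>"
  obtains xs where "is_walk S R xs" "hd xs = u" "last xs = v"
    "walk_dist S R w u v = walk_weight w xs"
proof -
  let ?W = "{xs. is_walk S R xs \<and> hd xs = u \<and> last xs = v}"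
  have "?W \<noteq> {}"
  proof
    assume "?W = {}"
    then have "walk_dist S R w u v = \<infinity>"
      unfolding walk_dist_def by (simp only: image_empty Inf_empty) (simp add: top_enat_def)
    with assms show False ..
  qed
  then obtain xs0 where "xs0 \<in> ?W" by blast
  then have "walk_dist S R w u v \<in> (\<lambda>xs. enat (walk_weight w xs)) ` ?W"
    unfolding walk_dist_def by (rule wellorder_InfI[OF imageI])
  then show ?thesis using that by blast
qed

lemma walk_dist_triangle:
  "walk_dist S R w u v \<le> walk_dist S R w u x + walk_dist S R w x v"
proof (cases "walk_dist S R w u x = \<infinity> \<or> walk_dist S R w x v = \<infinity>")
  case False
  then obtain xs ys where
    xs: "is_walk S R xs" "hd xs = u" "last xs = x" "walk_dist S R w u x = walk_weight w xs" and
    ys: "is_walk S R ys" "hd ys = x" "last ys = v" "walk_dist S R w x v = walk_weight w ys"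
    by (metis walk_dist_attained)
  have ne: "xs \<noteq> []" "ys \<noteq> []" using xs(1) ys(1) unfolding is_walk_def by auto
  have "walk_dist S R w u v \<le> walk_weight w (butlast xs @ ys)"
    using walk_dist_le[OF is_walk_join[OF xs(1) ys(1)]] ne xs(2,3) ys(2,3)
    by (cases xs) auto
  also have "\<dots> = walk_dist S R w u x + walk_dist S R w x v"
    using walk_weight_join[OF ne] xs ys by simp
  finally show ?thesis .
qed auto

lemma graph_dist_triangle: "graph_dist V E u v \<le> graph_dist V E u x + graph_dist V E x v"
  unfolding graph_dist_eq_walk_dist by (rule walk_dist_triangle)

lemma graph_dist_le_length:
  "is_walk V (\<lambda>a b. {a, b} \<in> E) xs \<Longrightarrow> graph_dist V E (hd xs) (last xs) \<le> length xs - 1"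
  unfolding graph_dist_eq_walk_dist by (metis walk_dist_le walk_weight_1)

lemma graph_dist_to_nth:
  assumes "is_walk V (\<lambda>a b. {a, b} \<in> E) xs" "k < length xs"
  shows "graph_dist V E (hd xs) (xs!k) \<le> k"
proof -
  have "hd (take (Suc k) xs) = hd xs" by (rule hd_take) simp
  moreover have "last (take (Suc k) xs) = xs!k" using assms(2) by (simp add: take_Suc_conv_app_nth)
  ultimately show ?thesis
    using graph_dist_le_length[OF is_walk_take[OF assms(1), of k]] assms(2) by simp
qed

lemma graph_dist_from_nth:
  assumes "is_walk V (\<lambda>a b. {a, b} \<in> E) xs" "k < length xs"
  shows "graph_dist V E (xs!k) (last xs) \<le> length xs - 1 - k"
  using graph_dist_le_length[OF is_walk_drop[OF assms]] assms
  by (simp add: hd_drop_conv_nth)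

lemma shortest_walk_distinct:
  assumes walk: "is_walk V (\<lambda>a b. {a, b} \<in> E) xs"
    and shortest: "graph_dist V E (hd xs) (last xs) = length xs - 1"
  shows "distinct xs"
proof (rule ccontr)
  assume "\<not> distinct xs"
  then obtain i j where ij: "i < j" "j < length xs" "xs!i = xs!j"
    by (metis distinct_conv_nth linorder_neqE_nat)
  have "graph_dist V E (hd xs) (xs!j) \<le> i"
    using graph_dist_to_nth[OF walk, of i] ij by simp
  moreover have "graph_dist V E (xs!j) (last xs) \<le> length xs - 1 - j"
    using graph_dist_from_nth[OF walk ij(2)] .
  ultimately have "graph_dist V E (hd xs) (last xs) \<le> enat i + enat (length xs - 1 - j)"
    by (meson add_mono graph_dist_triangle order_trans)
  then show False using shortest ij by simp
qed

lemma obtain_shortest_walk: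
  assumes "graph_dist V E u v = enat d"
  obtains xs where "is_walk V (\<lambda>a b. {a, b} \<in> E) xs" "hd xs = u" "last xs = v"
    "length xs = Suc d" "distinct xs"
proof -
  have "walk_dist V (\<lambda>a b. {a, b} \<in> E) (\<lambda>_ _. 1) u v \<noteq> \<infinity>"
    using assms unfolding graph_dist_eq_walk_dist by simp
  then obtain xs where xs: "is_walk V (\<lambda>a b. {a, b} \<in> E) xs" "hd xs = u" "last xs = v"
    "walk_dist V (\<lambda>a b. {a, b} \<in> E) (\<lambda>_ _. 1) u v = walk_weight (\<lambda>_ _. 1) xs"
    by (rule walk_dist_attained)
  have shortest: "graph_dist V E (hd xs) (last xs) = length xs - 1"
    using xs unfolding graph_dist_eq_walk_dist walk_weight_1 by simp
  moreover have "length xs = Suc d"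
    using shortest xs(1-3) assms unfolding is_walk_def by simp
  ultimately show ?thesis
    using that xs(1-3) shortest_walk_distinct[OF xs(1)] by simp
qed

lemma dist_le_walk_weight:
  assumes "distance_matrix n D" "xs \<noteq> []" "set xs \<subseteq> {1..n}"
  shows "D (hd xs) (last xs) \<le> walk_weight D xs"
  using assms(2,3)
proof (induction xs rule: induct_list012)
  case (2 x)
  then show ?case using assms(1) unfolding distance_matrix_def by simp
next
  case (3 x y zs)
  then have "D y (last (y # zs)) \<le> walk_weight D (y # zs)" by simp
  moreover have "last (y # zs) \<in> {1..n}"
    using "3.prems"(2) last_in_set[of "y # zs"] by auto
  then have "D x (last (y # zs)) \<le> D x y + D y (last (y # zs))"
    using assms(1) "3.prems"(2) unfolding distance_matrix_def by simp
  ultimately show ?case by simp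
qed simp

lemma skel_dist_ge:
  assumes "distance_matrix n D"
  shows "enat (D i j) \<le> skel_dist n D q i j"
  unfolding skel_dist_eq_walk_dist walk_dist_def
  by (rule INF_greatest) (use dist_le_walk_weight[OF assms] in \<open>auto simp: is_walk_def\<close>)

lemma skel_dist_le_if_le:
  assumes "distance_matrix n D" "i \<in> {1..n}" "j \<in> {1..n}" "D i j \<le> q"
  shows "skel_dist n D q i j \<le> D i j"
proof (cases "i = j")
  case True
  have "is_walk {1..n} (\<lambda>a b. a \<noteq> b \<and> D a b \<le> q) [i]"
    using assms(2) unfolding is_walk_def by simp
  then show ?thesis
    using walk_dist_le[of _ _ "[i]" D] True assms(1,2)
    unfolding skel_dist_eq_walk_dist distance_matrix_def by simp
next
  case False
  then have "is_walk {1..n} (\<lambda>a b. a \<noteq> b \<and> D a b \<le> q) [i, j]"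
    using assms(2-4) unfolding is_walk_def by simp
  then show ?thesis
    using walk_dist_le[of _ _ "[i, j]" D] unfolding skel_dist_eq_walk_dist by simp
qed

lemma skel_dist_triangle:
  "skel_dist n D q i j \<le> skel_dist n D q i w + skel_dist n D q w j"
  unfolding skel_dist_eq_walk_dist by (rule walk_dist_triangle)

definition strictly_between :: "(nat \<Rightarrow> nat \<Rightarrow> nat) \<Rightarrow> nat \<Rightarrow> nat \<Rightarrow> nat \<Rightarrow> bool" where
  "strictly_between D a w b \<longleftrightarrow> D a w < D a b \<and> D w b < D a b \<and> D a w + D w b \<le> D a b"

lemma obtain_pair_without_between:
  assumes dm: "distance_matrix n D" and "\<not> skel_eq n D q"
  obtains a b where "a \<in> {1..n}" "b \<in> {1..n}" "q < D a b"
    "\<forall>w\<in>{1..n}. \<not> strictly_between D a w b"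
proof -
  define defect where
    "defect d \<longleftrightarrow> (\<exists>a\<in>{1..n}. \<exists>b\<in>{1..n}. D a b = d \<and> skel_dist n D q a b \<noteq> D a b)" for d
  have "\<exists>d. defect d" using assms(2) unfolding skel_eq_def defect_def by blast
  then obtain d where "defect d" and minimal: "\<And>d'. d' < d \<Longrightarrow> \<not> defect d'"
    by (metis exists_least_iff)
  then obtain a b where ab: "a \<in> {1..n}" "b \<in> {1..n}" "D a b = d" "skel_dist n D q a b \<noteq> D a b"
    unfolding defect_def by blast
  have exact_below: "skel_dist n D q x y = D x y"
    if "x \<in> {1..n}" "y \<in> {1..n}" "D x y < D a b" for x y
    using minimal that ab(3) unfolding defect_def by blast
  have "q < D a b"
    using skel_dist_le_if_le[OF dm ab(1,2)] skel_dist_ge[OF dm] ab(4)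
    by (meson antisym not_le)
  moreover have "\<not> strictly_between D a w b" if w: "w \<in> {1..n}" for w
  proof
    assume between: "strictly_between D a w b"
    have "skel_dist n D q a b \<le> skel_dist n D q a w + skel_dist n D q w b"
      by (rule skel_dist_triangle)
    also have "\<dots> = D a w + D w b"
      using exact_below[OF ab(1) w] exact_below[OF w ab(2)] between
      unfolding strictly_between_def by simp
    also have "\<dots> \<le> D a b"
      using between unfolding strictly_between_def by simp
    finally show False
      using ab(4) skel_dist_ge[OF dm, of a b q] by simp
  qed
  ultimately show ?thesis using that ab(1,2) by blast
qed

lemma graph_realisation_image:
  assumes "graph_realisation n D V E \<Phi>"
  shows "card (\<Phi> ` {1..n}) = n" "\<Phi> ` {1..n} \<subseteq> V" "finite V"
  using assms unfolding graph_realisation_def simple_graph_def by (auto simp: card_image)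

lemma graph_realisation_card_ge:
  assumes real: "graph_realisation n D V E \<Phi>" and ab: "a \<in> {1..n}" "b \<in> {1..n}"
    and nothing_between: "\<forall>w\<in>{1..n}. \<not> strictly_between D a w b"
  shows "n + (D a b - 1) \<le> card V"
proof -
  define d where "d = D a b"
  have dist: "graph_dist V E (\<Phi> i) (\<Phi> j) = D i j" if "i \<in> {1..n}" "j \<in> {1..n}" for i j
    using real that unfolding graph_realisation_def by blast
  obtain xs where xs: "is_walk V (\<lambda>a b. {a, b} \<in> E) xs" "hd xs = \<Phi> a" "last xs = \<Phi> b"
    "length xs = Suc d" "distinct xs"
    using dist[OF ab] d_def by (metis obtain_shortest_walk)
  let ?I = "nth xs ` {1..<d}"
  have card_I: "card ?I = d - 1"
    using xs(4,5) by (simp add: card_image inj_on_nth)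
  have "?I \<subseteq> V"
    using xs(1,4) unfolding is_walk_def by (auto dest: nth_mem)
  have "\<Phi> ` {1..n} \<inter> ?I = {}"
  proof (rule ccontr)
    assume "\<Phi> ` {1..n} \<inter> ?I \<noteq> {}"
    then obtain w k where w: "w \<in> {1..n}" "k \<in> {1..<d}" "\<Phi> w = xs!k" by blast
    have "D a w \<le> k"
      using graph_dist_to_nth[OF xs(1), of k] dist[OF ab(1) w(1)] w xs(2,4) by simp
    moreover have "D w b \<le> d - k"
      using graph_dist_from_nth[OF xs(1), of k] dist[OF w(1) ab(2)] w xs(3,4) by simp
    ultimately have "strictly_between D a w b"
      using w(2) d_def unfolding strictly_between_def by auto
    then show False using nothing_between w(1) by blast
  qed
  then have "card (\<Phi> ` {1..n} \<union> ?I) = n + (d - 1)"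
    using graph_realisation_image(1)[OF real] card_I by (simp add: card_Un_disjoint)
  moreover have "card (\<Phi> ` {1..n} \<union> ?I) \<le> card V"
    using graph_realisation_image(2,3)[OF real] \<open>?I \<subseteq> V\<close> by (intro card_mono) auto
  ultimately show ?thesis using d_def by simp
qed

theorem mainTheorem10:
  fixes n :: nat and D :: "nat \<Rightarrow> nat \<Rightarrow> nat" and q0 :: nat
    and V :: "'v set" and E :: "'v set set" and \<Phi> :: "nat \<Rightarrow> 'v"
  assumes "distance_matrix n D"
    and "skel_eq n D q0"
    and "\<forall>q<q0. \<not> skel_eq n D q"
    and "graph_realisation n D V E \<Phi>"
  shows "int (card V) \<ge> int n + (int q0 - 1)"
proof (cases "q0 = 0")
  case True
  have "n \<le> card V"
    using graph_realisation_image[OF assms(4)] by (metis card_mono)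
  then show ?thesis using True by simp
next
  case False
  then have "\<not> skel_eq n D (q0 - 1)" using assms(3) by simp
  then obtain a b where ab: "a \<in> {1..n}" "b \<in> {1..n}" "q0 - 1 < D a b"
      "\<forall>w\<in>{1..n}. \<not> strictly_between D a w b"
    using obtain_pair_without_between[OF assms(1)] by metis
  have "n + (D a b - 1) \<le> card V"
    using graph_realisation_card_ge[OF assms(4) ab(1,2,4)] .
  then show ?thesis using ab(3) by linarith
qed

end
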